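(* Let $G$ be a $2$-edge-connected graph and $e\in E(G)$. Then the inequality $x_e\ge 0$ defines a facet of $\mathrm{TECSP}(G)$ if and only if $e$ is not contained in any cut of size exactly $3$.
   Context: All graphs are finite, simple and undirected. For $\emptyset\subsetneq S\subsetneq V(G)$, $\delta(S)$ is the set of edges with exactly one endpoint in $S$ (a cut); a cut with $k$ edges is a $k$-cut. An edge $e$ is a bridge if $\{e\}=\delta(S)$ for some $S$. A graph is $2$-edge-connected if it is connected and has no bridges; the empty graph and a single vertex are $2$-edge-connected. $\chi^H\in\{0,1\}^{E(G)}$ is the incidence vector of $E(H)$, and $\mathrm{TECSP}(G)=\mathrm{conv}\{\chi^H : H\subseteq G\text{ is }2\text{-edge-connected}\}\subseteq\mathbb{R}^{E(G)}$. A facet is a face of dimension $\dim(\mathrm{TECSP}(G))-1$. *)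

theory Defs
  imports "HOL-Analysis.Analysis"
begin

text \<open>A finite simple graph: vertex set V (finite), edge set = all elements of the
finite edge type 'e, each edge e has a 2-element set of endpoints ends e in V,
and distinct edges have distinct endpoint sets (no parallel edges).\<close>

definition simple_graph :: "'v set \<Rightarrow> ('e::finite \<Rightarrow> 'v set) \<Rightarrow> bool" where
  "simple_graph V ends \<longleftrightarrow> finite V \<and> inj ends \<and> (\<forall>e. ends e \<subseteq> V \<and> card (ends e) = 2)"

definition cut_edges :: "('e \<Rightarrow> 'v set) \<Rightarrow> 'e set \<Rightarrow> 'v set \<Rightarrow> 'e set" where
  "cut_edges ends F S = {e \<in> F. card (ends e \<inter> S) = 1}"

definition adj_rel :: "('e \<Rightarrow> 'v set) \<Rightarrow> 'e set \<Rightarrow> ('v \<times> 'v) set" where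
  "adj_rel ends F = {(x, y). \<exists>e\<in>F. ends e = {x, y}}"

definition connected_graph :: "('e \<Rightarrow> 'v set) \<Rightarrow> 'v set \<Rightarrow> 'e set \<Rightarrow> bool" where
  "connected_graph ends W F \<longleftrightarrow> (\<forall>u\<in>W. \<forall>v\<in>W. (u, v) \<in> (adj_rel ends F)\<^sup>*)"

definition is_bridge :: "('e \<Rightarrow> 'v set) \<Rightarrow> 'v set \<Rightarrow> 'e set \<Rightarrow> 'e \<Rightarrow> bool" where
  "is_bridge ends W F e \<longleftrightarrow>
     (\<exists>S. {} \<noteq> S \<and> S \<subset> W \<and> cut_edges ends F S = {e})"

definition two_edge_connected :: "('e \<Rightarrow> 'v set) \<Rightarrow> 'v set \<Rightarrow> 'e set \<Rightarrow> bool" where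
  "two_edge_connected ends W F \<longleftrightarrow>
     connected_graph ends W F \<and> (\<forall>e\<in>F. \<not> is_bridge ends W F e)"

definition is_subgraph :: "'v set \<Rightarrow> ('e \<Rightarrow> 'v set) \<Rightarrow> 'v set \<Rightarrow> 'e set \<Rightarrow> bool" where
  "is_subgraph V ends W F \<longleftrightarrow> W \<subseteq> V \<and> (\<forall>e\<in>F. ends e \<subseteq> W)"

definition incidence_vector :: "'e::finite set \<Rightarrow> real ^ 'e" where
  "incidence_vector F = (\<chi> e. if e \<in> F then 1 else 0)"

definition TECSP :: "'v set \<Rightarrow> ('e::finite \<Rightarrow> 'v set) \<Rightarrow> (real ^ 'e) set" where
  "TECSP V ends = convex hull
     {incidence_vector F | F. \<exists>W. is_subgraph V ends W F \<and> two_edge_connected ends W F}"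

end

theory Submission
  imports Defs
begin

text \<open>
  Since the empty graph and \<open>G\<close> are 2-edge-connected, \<open>0\<close> is a vertex of \<open>TECSP(G)\<close>; hence
  \<open>x\<^sub>e \<ge> 0\<close> is valid and \<open>{x\<^sub>e = 0}\<close> is a facet iff the incidence vectors of the
  2-edge-connected subgraphs avoiding \<open>e\<close> span a subspace of codimension one in the span of all
  of them. The codimension is at least one because of \<open>\<chi>\<^sup>G\<close>.

  If \<open>e\<close> lies in a 3-cut \<open>{e, f, g}\<close>, every 2-edge-connected subgraph avoiding \<open>e\<close> satisfies
  \<open>x\<^sub>f - x\<^sub>g = x\<^sub>e\<close>, and so does a 2-edge-connected subgraph containing \<open>e\<close> and \<open>f\<close> but not \<open>g\<close>
  (the component of \<open>e\<close> after deleting \<open>g\<close> and then all bridges), while \<open>\<chi>\<^sup>G\<close> does not: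
  the codimension is at least two.

  Otherwise, relate \<open>f\<close> and \<open>g\<close> when \<open>{f, g}\<close> is a cut. A 2-edge-connected subgraph \<open>H \<ni> e\<close> is
  a union of classes, so \<open>E - H\<close> is a disjoint union of classes \<open>C \<noteq> C\<^sub>e\<close>. As \<open>e\<close> lies in no
  3-cut, the complements of \<open>C\<^sub>e\<close> and of \<open>C\<^sub>e \<union> C\<close> are bridgeless, hence disjoint unions of
  2-edge-connected subgraphs avoiding \<open>e\<close>, and \<open>C\<close> is their difference. So
  \<open>\<chi>\<^sup>H = \<chi>\<^sup>G - \<chi>\<^bsup>E - H\<^esup>\<close> lies in the span of \<open>\<chi>\<^sup>G\<close> and the subgraphs avoiding \<open>e\<close>.
\<close>

section \<open>Coordinate faces of polytopes\<close>

lemma convex_hull_coordinate_nonneg: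
  fixes X :: "(real ^ 'n) set"
  assumes "\<forall>x\<in>X. 0 \<le> x $ i" "x \<in> convex hull X"
  shows "0 \<le> x $ i"
proof -
  have "convex hull X \<subseteq> {x. 0 \<le> x $ i}"
    using assms(1) by (intro hull_minimal) (auto simp: convex_def)
  with assms(2) show ?thesis by auto
qed

text \<open>With \<open>0\<close> among the vertices, affine dimensions are linear dimensions, and the face cut out
  by \<open>x $ i = 0\<close> is the convex hull of the vertices on it.\<close>
lemma coordinate_face_facet_iff:
  fixes X :: "(real ^ 'n) set"
  assumes "finite X" "0 \<in> X" "\<forall>x\<in>X. 0 \<le> x $ i"
  shows "{x \<in> convex hull X. x $ i = 0} facet_of convex hull X \<longleftrightarrow> dim X = dim {x \<in> X. x $ i = 0} + 1"
proof -
  let ?Xi = "{x \<in> X. x $ i = 0}"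
  have "(convex hull X \<inter> {x. axis i 1 \<bullet> x = 0}) face_of convex hull X"
    using convex_hull_coordinate_nonneg[OF assms(3)]
    by (intro face_of_Int_supporting_hyperplane_ge) (auto simp: inner_axis')
  moreover have "convex hull X \<inter> {x. axis i 1 \<bullet> x = 0} = {x \<in> convex hull X. x $ i = 0}"
    by (auto simp: inner_axis')
  ultimately have face: "{x \<in> convex hull X. x $ i = 0} face_of convex hull X" by simp
  have hull_Xi: "{x \<in> convex hull X. x $ i = 0} = convex hull ?Xi"
  proof
    obtain T where T: "T \<subseteq> X" "{x \<in> convex hull X. x $ i = 0} = convex hull T"
      using face_of_convex_hull_subset[OF finite_imp_compact[OF assms(1)] face] by blast
    then have "T \<subseteq> ?Xi" using hull_inc[of _ T] by blast
    then show "{x \<in> convex hull X. x $ i = 0} \<subseteq> convex hull ?Xi" unfolding T(2) by (rule hull_mono)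
    have "convex hull ?Xi \<subseteq> {x. x $ i = 0}" by (intro hull_minimal) (auto simp: convex_def)
    moreover have "convex hull ?Xi \<subseteq> convex hull X" by (intro hull_mono) auto
    ultimately show "convex hull ?Xi \<subseteq> {x \<in> convex hull X. x $ i = 0}" by auto
  qed
  have "0 \<in> ?Xi" using assms(2) by simp
  then have "aff_dim (convex hull ?Xi) = int (dim ?Xi)" "aff_dim (convex hull X) = int (dim X)"
    "convex hull ?Xi \<noteq> {}"
    using assms(2) by (auto simp: aff_dim_convex_hull aff_dim_zero hull_inc)
  then show ?thesis unfolding facet_of_def hull_Xi[symmetric] using face by auto
qed

section \<open>Incidence vectors\<close>

lemma incidence_vector_nth [simp]: "incidence_vector A $ i = (if i \<in> A then 1 else 0)"
  unfolding incidence_vector_def by simp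

lemma incidence_vector_empty [simp]: "incidence_vector {} = 0"
  by (simp add: vec_eq_iff)

lemma incidence_vector_Un:
  "A \<inter> B = {} \<Longrightarrow> incidence_vector (A \<union> B) = incidence_vector A + incidence_vector B"
  by (auto simp: vec_eq_iff)

lemma incidence_vector_Diff:
  "B \<subseteq> A \<Longrightarrow> incidence_vector (A - B) = incidence_vector A - incidence_vector B"
  by (auto simp: vec_eq_iff)

lemma incidence_vector_Union:
  fixes C :: "'e::finite set set"
  assumes "pairwise disjnt C"
  shows "incidence_vector (\<Union>C) = (\<Sum>c\<in>C. incidence_vector c)"
  unfolding vec_eq_iff
proof
  fix i
  show "incidence_vector (\<Union>C) $ i = (\<Sum>c\<in>C. incidence_vector c) $ i"
  proof (cases "i \<in> \<Union>C")
    case True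
    then obtain c where c: "c \<in> C" "i \<in> c" by blast
    with assms have "i \<notin> d" if "d \<in> C - {c}" for d
      using that unfolding pairwise_def disjnt_def by blast
    with c show ?thesis by (auto simp: sum.remove[of C c])
  qed auto
qed

section \<open>Cuts and bridgeless edge sets\<close>

lemma card_doubleton_Int_eq_1_iff:
  "p \<noteq> q \<Longrightarrow> card ({p, q} \<inter> S) = 1 \<longleftrightarrow> (p \<in> S \<longleftrightarrow> q \<notin> S)"
  by (cases "p \<in> S"; cases "q \<in> S") auto

lemma cut_edges_eq_Int: "cut_edges ends F S = cut_edges ends UNIV S \<inter> F"
  unfolding cut_edges_def by auto

definition bridgeless :: "('e \<Rightarrow> 'v set) \<Rightarrow> 'e set \<Rightarrow> bool" where
  "bridgeless ends F \<longleftrightarrow> (\<forall>S. card (cut_edges ends F S) \<noteq> 1)"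

lemma bridgeless_cut_edges_ne_singleton:
  assumes "bridgeless ends F"
  shows "cut_edges ends F S \<noteq> {h}"
proof
  assume "cut_edges ends F S = {h}"
  then have "card (cut_edges ends F S) = 1" by simp
  with assms show False unfolding bridgeless_def by blast
qed

definition two_edge_connected_subgraphs :: "'v set \<Rightarrow> ('e \<Rightarrow> 'v set) \<Rightarrow> 'e set set" where
  "two_edge_connected_subgraphs V ends =
     {F. \<exists>W. is_subgraph V ends W F \<and> two_edge_connected ends W F}"

context
  fixes V :: "'v set" and ends :: "'e::finite \<Rightarrow> 'v set"
  assumes simple: "simple_graph V ends"
begin

lemma obtain_ends:
  obtains p q where "p \<noteq> q" "ends h = {p, q}" "p \<in> V" "q \<in> V"
proof -
  have "card (ends h) = 2" "ends h \<subseteq> V" using simple unfolding simple_graph_def by auto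
  then show ?thesis using that by (metis card_2_iff insert_subset)
qed

lemma mem_cut_edges_iff:
  assumes "ends h = {p, q}" "p \<noteq> q"
  shows "h \<in> cut_edges ends F S \<longleftrightarrow> h \<in> F \<and> (p \<in> S \<longleftrightarrow> q \<notin> S)"
  using assms card_doubleton_Int_eq_1_iff[of p q S] unfolding cut_edges_def by auto

lemma cut_edges_sym_diff:
  "cut_edges ends F (sym_diff S T) = sym_diff (cut_edges ends F S) (cut_edges ends F T)"
proof (rule set_eqI)
  fix h
  obtain p q where "p \<noteq> q" "ends h = {p, q}" by (rule obtain_ends)
  then show "h \<in> cut_edges ends F (sym_diff S T) \<longleftrightarrow>
      h \<in> sym_diff (cut_edges ends F S) (cut_edges ends F T)"
    using mem_cut_edges_iff[of h p q F] by auto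
qed

lemma cut_edges_Int_vertices:
  assumes "h \<in> cut_edges ends F S"
  shows "{} \<noteq> S \<inter> V" "S \<inter> V \<subset> V" "cut_edges ends F (S \<inter> V) = cut_edges ends F S"
proof -
  obtain p q where pq: "p \<noteq> q" "ends h = {p, q}" "p \<in> V" "q \<in> V" by (rule obtain_ends)
  then have "p \<in> S \<longleftrightarrow> q \<notin> S" using assms mem_cut_edges_iff by blast
  then show "{} \<noteq> S \<inter> V" "S \<inter> V \<subset> V" using pq by auto
  have "ends k \<inter> (S \<inter> V) = ends k \<inter> S" for k using simple unfolding simple_graph_def by blast
  then show "cut_edges ends F (S \<inter> V) = cut_edges ends F S" unfolding cut_edges_def by simp
qed

text \<open>Adding the cuts \<open>T\<close> (symmetric difference of shores) removes the edges of \<open>Z\<close> from the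
  cut of \<open>S\<close> one at a time, without touching edges outside \<open>Z \<union> Q\<close>.\<close>
lemma cut_edges_cancel:
  assumes "finite Z" "Z \<inter> Q = {}" "\<forall>z\<in>Z. \<exists>T. cut_edges ends F T - Q = {z}"
  shows "\<exists>S'. cut_edges ends F S' \<inter> Z = {} \<and> cut_edges ends F S' - Z - Q = cut_edges ends F S - Z - Q"
  using assms
proof (induction Z rule: finite_induct)
  case empty
  then show ?case by auto
next
  case (insert z Z)
  then obtain S1 where S1: "cut_edges ends F S1 \<inter> Z = {}"
    "cut_edges ends F S1 - Z - Q = cut_edges ends F S - Z - Q" by auto
  obtain T where T: "cut_edges ends F T - Q = {z}" using insert.prems by auto
  show ?case
  proof (cases "z \<in> cut_edges ends F S1")
    case False
    then show ?thesis using S1 by (intro exI[of _ S1]) blast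
  next
    case True
    then show ?thesis using S1 T insert.hyps insert.prems
      by (intro exI[of _ "sym_diff S1 T"]) (auto simp: cut_edges_sym_diff)
  qed
qed

lemma bridgeless_Diff_bridges:
  "bridgeless ends (F - {f \<in> F. \<exists>T. cut_edges ends F T = {f}})" (is "bridgeless ends (F - ?B)")
  unfolding bridgeless_def
proof (intro allI notI)
  fix S assume "card (cut_edges ends (F - ?B) S) = 1"
  then obtain h where h: "cut_edges ends (F - ?B) S = {h}" by (meson card_1_singletonE)
  obtain S' where S': "cut_edges ends F S' \<inter> ?B = {}"
    "cut_edges ends F S' - ?B - {} = cut_edges ends F S - ?B - {}"
    using cut_edges_cancel[of ?B "{}" F S] by auto
  have "cut_edges ends F S - ?B = {h}"
    using h cut_edges_eq_Int[of ends F S] cut_edges_eq_Int[of ends "F - ?B" S] by auto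
  then have "cut_edges ends F S' = {h}" using S' by auto
  moreover from this have "h \<in> F" unfolding cut_edges_def by auto
  ultimately have "h \<in> ?B" by auto
  then show False using h unfolding cut_edges_def by auto
qed

lemma bridgeless_two_edge_connected_subgraph:
  assumes "F \<in> two_edge_connected_subgraphs V ends"
  shows "bridgeless ends F"
  unfolding bridgeless_def
proof (intro allI notI)
  obtain W where W: "is_subgraph V ends W F" "two_edge_connected ends W F"
    using assms unfolding two_edge_connected_subgraphs_def by blast
  fix S assume "card (cut_edges ends F S) = 1"
  then obtain h where h: "cut_edges ends F S = {h}" by (meson card_1_singletonE)
  then have hF: "h \<in> F" unfolding cut_edges_def by auto
  obtain p q where pq: "p \<noteq> q" "ends h = {p, q}" by (rule obtain_ends)
  have "ends h \<subseteq> W" using hF W(1) unfolding is_subgraph_def by auto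
  moreover have "p \<in> S \<longleftrightarrow> q \<notin> S" using h mem_cut_edges_iff[OF pq(2,1)] by blast
  ultimately have proper: "{} \<noteq> S \<inter> W" "S \<inter> W \<subset> W" using pq by auto
  have "ends k \<inter> (S \<inter> W) = ends k \<inter> S" if "k \<in> F" for k
    using W(1) that unfolding is_subgraph_def by blast
  then have "cut_edges ends F (S \<inter> W) = cut_edges ends F S" unfolding cut_edges_def by auto
  then have "is_bridge ends W F h" unfolding is_bridge_def using proper h by metis
  then show False using W(2) hF unfolding two_edge_connected_def by blast
qed

end

section \<open>Components of bridgeless edge sets\<close>

definition component_edges :: "('e \<Rightarrow> 'v set) \<Rightarrow> 'e set \<Rightarrow> 'v \<Rightarrow> 'e set" where
  "component_edges ends F x = {f \<in> F. ends f \<subseteq> (adj_rel ends F)\<^sup>* `` {x}}"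

context
  fixes V :: "'v set" and ends :: "'e::finite \<Rightarrow> 'v set"
  assumes simple: "simple_graph V ends"
begin

lemma ends_subset_reachable:
  assumes "f \<in> F" "ends f \<inter> (adj_rel ends F)\<^sup>* `` {x} \<noteq> {}"
  shows "ends f \<subseteq> (adj_rel ends F)\<^sup>* `` {x}"
proof -
  obtain p q where pq: "p \<noteq> q" "ends f = {p, q}" by (rule obtain_ends[OF simple])
  then have "(p, q) \<in> adj_rel ends F" "(q, p) \<in> adj_rel ends F"
    using assms(1) unfolding adj_rel_def by (auto simp: insert_commute)
  moreover have "(x, p) \<in> (adj_rel ends F)\<^sup>* \<or> (x, q) \<in> (adj_rel ends F)\<^sup>*" using assms(2) pq by auto
  ultimately show ?thesis using pq by (auto intro: rtrancl_into_rtrancl)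
qed

lemma mem_component_edges: "f \<in> F \<Longrightarrow> x \<in> ends f \<Longrightarrow> f \<in> component_edges ends F x"
  using ends_subset_reachable[of f F x] unfolding component_edges_def by auto

lemma reachable_subset_vertices:
  assumes "x \<in> V"
  shows "(adj_rel ends F)\<^sup>* `` {x} \<subseteq> V"
proof
  fix y assume "y \<in> (adj_rel ends F)\<^sup>* `` {x}"
  then have "(x, y) \<in> (adj_rel ends F)\<^sup>*" by simp
  then show "y \<in> V"
  proof (induction rule: rtrancl_induct)
    case (step y z)
    then obtain f where "ends f = {y, z}" unfolding adj_rel_def by auto
    then show ?case using simple unfolding simple_graph_def by blast
  qed (use assms in simp)
qed

lemma connected_component_edges:
  "connected_graph ends ((adj_rel ends F)\<^sup>* `` {x}) (component_edges ends F x)"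
proof -
  let ?K = "component_edges ends F x"
  have reach: "(x, y) \<in> (adj_rel ends ?K)\<^sup>*" if "(x, y) \<in> (adj_rel ends F)\<^sup>*" for y
    using that
  proof (induction rule: rtrancl_induct)
    case (step y z)
    then obtain f where f: "f \<in> F" "ends f = {y, z}" unfolding adj_rel_def by auto
    have "ends f \<subseteq> (adj_rel ends F)\<^sup>* `` {x}"
      using ends_subset_reachable[OF f(1)] step(1) f(2) by auto
    with f(1) have "f \<in> ?K" unfolding component_edges_def by auto
    with f have "(y, z) \<in> adj_rel ends ?K" unfolding adj_rel_def by auto
    with step(3) show ?case by (rule rtrancl_into_rtrancl)
  qed simp
  have "sym ((adj_rel ends ?K)\<^sup>*)"
    by (intro sym_rtrancl) (auto simp: sym_def adj_rel_def insert_commute)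
  show ?thesis
    unfolding connected_graph_def
  proof (intro ballI)
    fix y z assume "y \<in> (adj_rel ends F)\<^sup>* `` {x}" "z \<in> (adj_rel ends F)\<^sup>* `` {x}"
    then have "(x, y) \<in> (adj_rel ends ?K)\<^sup>*" "(x, z) \<in> (adj_rel ends ?K)\<^sup>*" using reach by auto
    with \<open>sym ((adj_rel ends ?K)\<^sup>*)\<close> show "(y, z) \<in> (adj_rel ends ?K)\<^sup>*"
      by (meson rtrancl_trans symD)
  qed
qed

lemma cut_edges_component_edges:
  assumes "S \<subseteq> (adj_rel ends F)\<^sup>* `` {x}"
  shows "cut_edges ends (component_edges ends F x) S = cut_edges ends F S"
proof -
  have "ends f \<subseteq> (adj_rel ends F)\<^sup>* `` {x}" if "f \<in> F" "card (ends f \<inter> S) = 1" for f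
  proof -
    have "ends f \<inter> S \<noteq> {}" using that(2) by force
    then show ?thesis using that(1) assms ends_subset_reachable[of f F x] by blast
  qed
  then show ?thesis unfolding cut_edges_def component_edges_def by auto
qed

lemma component_edges_mem_two_edge_connected_subgraphs:
  assumes "bridgeless ends F" "x \<in> V"
  shows "component_edges ends F x \<in> two_edge_connected_subgraphs V ends"
proof -
  let ?R = "(adj_rel ends F)\<^sup>* `` {x}" and ?K = "component_edges ends F x"
  have "is_subgraph V ends ?R ?K"
    using reachable_subset_vertices[OF assms(2)] unfolding is_subgraph_def component_edges_def by auto
  moreover have "\<not> is_bridge ends ?R ?K k" for k
  proof
    assume "is_bridge ends ?R ?K k"
    then obtain S where "S \<subset> ?R" "cut_edges ends ?K S = {k}" unfolding is_bridge_def by auto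
    then have "cut_edges ends F S = {k}" using cut_edges_component_edges[of S F x] by auto
    then show False using bridgeless_cut_edges_ne_singleton[OF assms(1)] by blast
  qed
  ultimately show ?thesis using connected_component_edges
    unfolding two_edge_connected_subgraphs_def two_edge_connected_def by blast
qed

lemma bridgeless_Diff_component_edges:
  assumes "bridgeless ends F"
  shows "bridgeless ends (F - component_edges ends F x)"
proof -
  let ?R = "(adj_rel ends F)\<^sup>* `` {x}" and ?K = "component_edges ends F x"
  have "cut_edges ends (F - ?K) S = cut_edges ends F (S - ?R)" for S
  proof (rule set_eqI)
    fix f
    show "f \<in> cut_edges ends (F - ?K) S \<longleftrightarrow> f \<in> cut_edges ends F (S - ?R)"
    proof (cases "f \<in> F - ?K")
      case True
      then have "ends f \<inter> ?R = {}"
        using ends_subset_reachable[of f F x] unfolding component_edges_def by blast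
      then have "ends f \<inter> (S - ?R) = ends f \<inter> S" by blast
      with True show ?thesis by (simp add: cut_edges_def)
    next
      case False
      then have "f \<notin> F \<or> ends f \<inter> (S - ?R) = {}" unfolding component_edges_def by blast
      then show ?thesis
      proof
        assume "ends f \<inter> (S - ?R) = {}"
        with False show ?thesis by (simp add: cut_edges_def)
      qed (simp add: cut_edges_def)
    qed
  qed
  then show ?thesis using assms unfolding bridgeless_def by simp
qed

text \<open>A bridgeless edge set is the disjoint union of its components, which are 2-edge-connected.\<close>
lemma bridgeless_in_span_subgraphs:
  "bridgeless ends F \<Longrightarrow>
    incidence_vector F \<in> span (incidence_vector ` {H \<in> two_edge_connected_subgraphs V ends. H \<subseteq> F})"
proof (induction "card F" arbitrary: F rule: less_induct)
  case less
  let ?span = "\<lambda>F. span (incidence_vector ` {H \<in> two_edge_connected_subgraphs V ends. H \<subseteq> F})"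
  show ?case
  proof (cases "F = {}")
    case False
    then obtain h where h: "h \<in> F" by auto
    obtain p q where pq: "p \<noteq> q" "ends h = {p, q}" "p \<in> V" "q \<in> V" by (rule obtain_ends[OF simple])
    define K where "K = component_edges ends F p"
    have KF: "K \<subseteq> F" unfolding K_def component_edges_def by auto
    have "K \<in> two_edge_connected_subgraphs V ends"
      unfolding K_def using component_edges_mem_two_edge_connected_subgraphs[OF less.prems pq(3)] .
    with KF have K_span: "incidence_vector K \<in> ?span F" by (intro span_base) auto
    have "h \<in> K" unfolding K_def using mem_component_edges[OF h] pq(2) by simp
    then have "card (F - K) < card F" using KF h by (intro psubset_card_mono) auto
    moreover have "bridgeless ends (F - K)"
      unfolding K_def using bridgeless_Diff_component_edges[OF less.prems] .
    ultimately have "incidence_vector (F - K) \<in> ?span (F - K)" using less.hyps by blast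
    also have "\<dots> \<subseteq> ?span F" by (intro span_mono) auto
    finally have "incidence_vector (F - K) \<in> ?span F" .
    moreover have "incidence_vector F = incidence_vector K + incidence_vector (F - K)"
      using incidence_vector_Un[of K "F - K"] KF by (simp add: Un_absorb1)
    ultimately show ?thesis using K_span by (simp add: span_add)
  qed (simp add: span_zero)
qed

lemma bridgeless_avoiding_in_span:
  assumes "bridgeless ends F" "e \<notin> F"
  shows "incidence_vector F \<in> span (incidence_vector ` {H \<in> two_edge_connected_subgraphs V ends. e \<notin> H})"
proof -
  have "incidence_vector ` {H \<in> two_edge_connected_subgraphs V ends. H \<subseteq> F}
      \<subseteq> incidence_vector ` {H \<in> two_edge_connected_subgraphs V ends. e \<notin> H}"
    using assms(2) by auto
  then show ?thesis using bridgeless_in_span_subgraphs[OF assms(1)] span_mono by blast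
qed

end

section \<open>The 2-cut relation\<close>

definition two_cut_rel :: "('e \<Rightarrow> 'v set) \<Rightarrow> 'e rel" where
  "two_cut_rel ends = {(f, g). f = g \<or> (\<exists>S. cut_edges ends UNIV S = {f, g})}"

context
  fixes V :: "'v set" and ends :: "'e::finite \<Rightarrow> 'v set"
  assumes simple: "simple_graph V ends"
begin

lemma equiv_two_cut_rel: "equiv UNIV (two_cut_rel ends)"
proof (rule equivI)
  show "two_cut_rel ends \<subseteq> UNIV \<times> UNIV" by simp
  show "refl (two_cut_rel ends)" by (auto simp: refl_on_def two_cut_rel_def)
  show "sym (two_cut_rel ends)" unfolding two_cut_rel_def by (auto intro: symI simp: insert_commute)
  show "trans (two_cut_rel ends)"
  proof (rule transI)
    fix f g h assume fg: "(f, g) \<in> two_cut_rel ends" and gh: "(g, h) \<in> two_cut_rel ends"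
    show "(f, h) \<in> two_cut_rel ends"
    proof (cases "f = g \<or> g = h \<or> f = h")
      case False
      then obtain S T where "cut_edges ends UNIV S = {f, g}" "cut_edges ends UNIV T = {g, h}"
        using fg gh unfolding two_cut_rel_def by auto
      with False have "cut_edges ends UNIV (sym_diff S T) = {f, h}"
        by (auto simp: cut_edges_sym_diff[OF simple])
      then show ?thesis unfolding two_cut_rel_def by blast
    qed (use fg gh in \<open>auto simp: two_cut_rel_def\<close>)
  qed
qed

lemma two_cut_rel_closed:
  assumes "F \<in> two_edge_connected_subgraphs V ends" "(f, g) \<in> two_cut_rel ends" "f \<in> F"
  shows "g \<in> F"
proof (rule ccontr)
  assume "g \<notin> F"
  with assms(2,3) obtain S where "cut_edges ends UNIV S = {f, g}" "f \<noteq> g"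
    unfolding two_cut_rel_def by auto
  with \<open>g \<notin> F\<close> assms(3) have "cut_edges ends F S = {f}" using cut_edges_eq_Int[of ends F S] by auto
  then show False
    using bridgeless_cut_edges_ne_singleton[OF bridgeless_two_edge_connected_subgraph[OF simple assms(1)]]
    by blast
qed

end

section \<open>The dimension count\<close>

definition in_three_cut :: "('e \<Rightarrow> 'v set) \<Rightarrow> 'e \<Rightarrow> bool" where
  "in_three_cut ends e \<longleftrightarrow> (\<exists>S. e \<in> cut_edges ends UNIV S \<and> card (cut_edges ends UNIV S) = 3)"

context
  fixes V :: "'v set" and ends :: "'e::finite \<Rightarrow> 'v set"
  assumes simple: "simple_graph V ends"
    and tec: "two_edge_connected ends V UNIV"
begin

lemma UNIV_mem_two_edge_connected_subgraphs: "UNIV \<in> two_edge_connected_subgraphs V ends"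
  using simple tec unfolding two_edge_connected_subgraphs_def is_subgraph_def simple_graph_def by auto

lemma bridgeless_UNIV: "bridgeless ends UNIV"
  by (rule bridgeless_two_edge_connected_subgraph[OF simple UNIV_mem_two_edge_connected_subgraphs])

lemma bridgeless_Compl_two_cut_classes:
  assumes "\<not> in_three_cut ends e"
  shows "bridgeless ends (- (two_cut_rel ends `` {e} \<union> two_cut_rel ends `` {f}))"
    (is "bridgeless ends (- ?Z)")
  unfolding bridgeless_def
proof (intro allI notI)
  fix S assume "card (cut_edges ends (- ?Z) S) = 1"
  then obtain b where b: "cut_edges ends (- ?Z) S = {b}" by (meson card_1_singletonE)
  have ef: "e \<in> ?Z" "f \<in> ?Z"
    using equiv_class_self[OF equiv_two_cut_rel[OF simple]] by blast+
  have "b \<notin> ?Z" using b unfolding cut_edges_def by auto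
  then have b_unrelated: "b \<noteq> e" "b \<noteq> f" "(e, b) \<notin> two_cut_rel ends" "(f, b) \<notin> two_cut_rel ends"
    using ef by auto
  have "\<forall>z \<in> ?Z - {e, f}. \<exists>T. cut_edges ends UNIV T - {e, f} = {z}"
    unfolding two_cut_rel_def by auto
  then obtain S' where S': "cut_edges ends UNIV S' \<inter> (?Z - {e, f}) = {}"
    "cut_edges ends UNIV S' - (?Z - {e, f}) - {e, f} = cut_edges ends UNIV S - (?Z - {e, f}) - {e, f}"
    using cut_edges_cancel[OF simple, of "?Z - {e, f}" "{e, f}" UNIV S] by auto
  have "cut_edges ends UNIV S - (?Z - {e, f}) - {e, f} = {b}"
    using b ef cut_edges_eq_Int[of ends "- ?Z" S] by auto
  with S' have "cut_edges ends UNIV S' \<subseteq> {b, e, f}" "b \<in> cut_edges ends UNIV S'" by auto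
  then consider "cut_edges ends UNIV S' = {b}" | "cut_edges ends UNIV S' = {e, b}"
    | "cut_edges ends UNIV S' = {f, b}" | "e \<noteq> f" "cut_edges ends UNIV S' = {b, e, f}"
    by blast
  then show False
  proof cases
    case 1
    then show False using bridgeless_cut_edges_ne_singleton[OF bridgeless_UNIV] by blast
  next
    case 2
    then show False using b_unrelated unfolding two_cut_rel_def by blast
  next
    case 3
    then show False using b_unrelated unfolding two_cut_rel_def by blast
  next
    case 4
    then show False using assms b_unrelated unfolding in_three_cut_def by auto
  qed
qed

lemma two_cut_class_in_span:
  assumes "\<not> in_three_cut ends e" "(e, f) \<notin> two_cut_rel ends"
  shows "incidence_vector (two_cut_rel ends `` {f})
    \<in> span (incidence_vector ` {H \<in> two_edge_connected_subgraphs V ends. e \<notin> H})"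
proof -
  let ?C = "\<lambda>g. two_cut_rel ends `` {g}"
  have e: "e \<in> ?C e" using equiv_class_self[OF equiv_two_cut_rel[OF simple]] by blast
  have "?C e \<inter> ?C f = {}"
    using disjnt_equiv_class[OF equiv_two_cut_rel[OF simple]] assms(2) unfolding disjnt_def by blast
  then have "- ?C e - - (?C e \<union> ?C f) = ?C f" by blast
  then have "incidence_vector (?C f) = incidence_vector (- ?C e) - incidence_vector (- (?C e \<union> ?C f))"
    using incidence_vector_Diff[of "- (?C e \<union> ?C f)" "- ?C e"] by auto
  moreover have "incidence_vector (- ?C e)
      \<in> span (incidence_vector ` {H \<in> two_edge_connected_subgraphs V ends. e \<notin> H})"
    using bridgeless_Compl_two_cut_classes[OF assms(1), of e] e
    by (intro bridgeless_avoiding_in_span[OF simple]) auto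
  moreover have "incidence_vector (- (?C e \<union> ?C f))
      \<in> span (incidence_vector ` {H \<in> two_edge_connected_subgraphs V ends. e \<notin> H})"
    using bridgeless_Compl_two_cut_classes[OF assms(1), of f] e
    by (intro bridgeless_avoiding_in_span[OF simple]) auto
  ultimately show ?thesis by (simp add: span_diff)
qed

lemma two_edge_connected_subgraph_in_span:
  assumes "\<not> in_three_cut ends e"
    and F: "F \<in> two_edge_connected_subgraphs V ends" "e \<in> F"
  shows "incidence_vector F \<in> span (insert (incidence_vector UNIV)
    (incidence_vector ` {H \<in> two_edge_connected_subgraphs V ends. e \<notin> H}))"
    (is "_ \<in> span (insert _ ?Xe)")
proof -
  have equiv: "equiv UNIV (two_cut_rel ends)" by (rule equiv_two_cut_rel[OF simple])
  let ?C = "\<lambda>g. two_cut_rel ends `` {g}"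
  have "?C g \<subseteq> - F" if "g \<notin> F" for g
    using that two_cut_rel_closed[OF simple F(1)] equiv unfolding equiv_def sym_def by blast
  then have "\<Union>(?C ` (- F)) = - F"
    using equiv_class_self[OF equiv] by blast
  moreover have "pairwise disjnt (?C ` (- F))"
  proof (rule pairwiseI)
    fix c d assume "c \<in> ?C ` (- F)" "d \<in> ?C ` (- F)" "c \<noteq> d"
    then obtain g h where "c = ?C g" "d = ?C h" "(g, h) \<notin> two_cut_rel ends"
      using equiv_class_eq[OF equiv] by blast
    then show "disjnt c d" using disjnt_equiv_class[OF equiv] by blast
  qed
  ultimately have "incidence_vector (- F) = (\<Sum>c \<in> ?C ` (- F). incidence_vector c)"
    by (metis incidence_vector_Union)
  also have "\<dots> \<in> span ?Xe"
  proof (intro span_sum)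
    fix c assume "c \<in> ?C ` (- F)"
    then obtain g where "c = ?C g" "g \<notin> F" by blast
    moreover have "(e, g) \<notin> two_cut_rel ends"
      using \<open>g \<notin> F\<close> two_cut_rel_closed[OF simple F(1) _ F(2)] by blast
    ultimately show "incidence_vector c \<in> span ?Xe" using two_cut_class_in_span[OF assms(1)] by simp
  qed
  finally have "incidence_vector (- F) \<in> span (insert (incidence_vector UNIV) ?Xe)"
    using span_mono[of ?Xe "insert (incidence_vector UNIV) ?Xe"] by blast
  moreover have "incidence_vector F = incidence_vector UNIV - incidence_vector (- F)"
    using incidence_vector_Diff[of "- F" UNIV] by simp
  ultimately show ?thesis by (simp add: span_diff span_base)
qed

lemma three_cut_separating_subgraph:
  assumes S: "cut_edges ends UNIV S = {e, f, g}" "e \<noteq> f" "e \<noteq> g" "f \<noteq> g"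
  obtains K where "K \<in> two_edge_connected_subgraphs V ends" "e \<in> K" "f \<in> K" "g \<notin> K"
proof -
  define B where "B = {h \<in> - {g}. \<exists>T. cut_edges ends (- {g}) T = {h}}"
  have "e \<notin> B"
  proof
    assume "e \<in> B"
    then obtain T where "cut_edges ends (- {g}) T = {e}" unfolding B_def by auto
    then have T: "cut_edges ends UNIV T - {g} = {e}" using cut_edges_eq_Int[of ends "- {g}" T] by auto
    show False
    proof (cases "g \<in> cut_edges ends UNIV T")
      case True
      with T S have "cut_edges ends UNIV (sym_diff S T) = {f}" by (auto simp: cut_edges_sym_diff[OF simple])
      then show False using bridgeless_cut_edges_ne_singleton[OF bridgeless_UNIV] by blast
    next
      case False
      with T have "cut_edges ends UNIV T = {e}" by auto
      then show False using bridgeless_cut_edges_ne_singleton[OF bridgeless_UNIV] by blast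
    qed
  qed
  obtain p q where pq: "p \<noteq> q" "ends e = {p, q}" "p \<in> V" "q \<in> V" by (rule obtain_ends[OF simple])
  define K where "K = component_edges ends (- {g} - B) p"
  have K: "K \<in> two_edge_connected_subgraphs V ends"
    unfolding K_def B_def
    by (intro component_edges_mem_two_edge_connected_subgraphs[OF simple]
        bridgeless_Diff_bridges[OF simple] pq(3))
  have "e \<in> K" unfolding K_def using mem_component_edges[OF simple, of e] \<open>e \<notin> B\<close> S(3) pq(2) by auto
  moreover have "g \<notin> K" unfolding K_def component_edges_def by auto
  moreover have "f \<in> K"
  proof (rule ccontr)
    assume "f \<notin> K"
    with \<open>e \<in> K\<close> \<open>g \<notin> K\<close> have "cut_edges ends K S = {e}" using S(1) cut_edges_eq_Int[of ends K S] by auto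
    then show False
      using bridgeless_cut_edges_ne_singleton[OF bridgeless_two_edge_connected_subgraph[OF simple K]] by blast
  qed
  ultimately show ?thesis using K that by blast
qed

lemma three_cut_avoiding_iff:
  assumes "F \<in> two_edge_connected_subgraphs V ends" "cut_edges ends UNIV S = {e, f, g}" "f \<noteq> g"
    "e \<notin> F"
  shows "f \<in> F \<longleftrightarrow> g \<in> F"
proof -
  have "cut_edges ends F S = {f, g} \<inter> F" using assms(2,4) cut_edges_eq_Int[of ends F S] by auto
  then show ?thesis
    using assms(3) bridgeless_cut_edges_ne_singleton[OF bridgeless_two_edge_connected_subgraph[OF simple assms(1)]]
    by (cases "f \<in> F"; cases "g \<in> F") auto
qed

lemma dim_avoiding_add_two_le:
  assumes "in_three_cut ends e"
  shows "dim (incidence_vector ` {H \<in> two_edge_connected_subgraphs V ends. e \<notin> H}) + 2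
    \<le> dim (incidence_vector ` two_edge_connected_subgraphs V ends)"
proof -
  let ?Xe = "incidence_vector ` {H \<in> two_edge_connected_subgraphs V ends. e \<notin> H}"
  obtain S where "e \<in> cut_edges ends UNIV S" "card (cut_edges ends UNIV S) = 3"
    using assms unfolding in_three_cut_def by blast
  moreover from this have "card (cut_edges ends UNIV S - {e}) = 2" by simp
  then obtain f g where "cut_edges ends UNIV S - {e} = {f, g}" "f \<noteq> g" by (meson card_2_iff)
  ultimately have S: "cut_edges ends UNIV S = {e, f, g}" "e \<noteq> f" "e \<noteq> g" "f \<noteq> g" by auto
  obtain K where K: "K \<in> two_edge_connected_subgraphs V ends" "e \<in> K" "f \<in> K" "g \<notin> K"
    using three_cut_separating_subgraph[OF S] .
  have "insert (incidence_vector K) ?Xe \<subseteq> {x. x $ f - x $ g = x $ e}"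
    using K three_cut_avoiding_iff[OF _ S(1,4)] by auto
  then have "span (insert (incidence_vector K) ?Xe) \<subseteq> {x. x $ f - x $ g = x $ e}"
    by (rule span_minimal) (auto simp: subspace_def algebra_simps)
  then have "incidence_vector UNIV \<notin> span (insert (incidence_vector K) ?Xe)" by auto
  moreover have "span ?Xe \<subseteq> {x. x $ e = 0}" by (intro span_minimal) (auto simp: subspace_def)
  then have "incidence_vector K \<notin> span ?Xe" using K(2) by auto
  ultimately have "dim (insert (incidence_vector UNIV) (insert (incidence_vector K) ?Xe)) = dim ?Xe + 2"
    by (simp add: dim_insert)
  moreover have "insert (incidence_vector UNIV) (insert (incidence_vector K) ?Xe)
      \<subseteq> incidence_vector ` two_edge_connected_subgraphs V ends"
    using K(1) UNIV_mem_two_edge_connected_subgraphs by auto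
  then have "dim (insert (incidence_vector UNIV) (insert (incidence_vector K) ?Xe))
      \<le> dim (incidence_vector ` two_edge_connected_subgraphs V ends)"
    by (rule dim_subset)
  ultimately show ?thesis by simp
qed

lemma dim_eq_dim_avoiding_plus_one_iff:
  "dim (incidence_vector ` two_edge_connected_subgraphs V ends)
      = dim (incidence_vector ` {H \<in> two_edge_connected_subgraphs V ends. e \<notin> H}) + 1
    \<longleftrightarrow> \<not> in_three_cut ends e"
proof -
  let ?X = "incidence_vector ` two_edge_connected_subgraphs V ends"
  let ?Xe = "incidence_vector ` {H \<in> two_edge_connected_subgraphs V ends. e \<notin> H}"
  have "span ?Xe \<subseteq> {x. x $ e = 0}" by (intro span_minimal) (auto simp: subspace_def)
  then have "incidence_vector UNIV \<notin> span ?Xe" by auto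
  then have "dim (insert (incidence_vector UNIV) ?Xe) = dim ?Xe + 1" by (simp add: dim_insert)
  moreover have "insert (incidence_vector UNIV) ?Xe \<subseteq> ?X"
    using UNIV_mem_two_edge_connected_subgraphs by blast
  then have "dim (insert (incidence_vector UNIV) ?Xe) \<le> dim ?X" by (rule dim_subset)
  ultimately have lower: "dim ?Xe + 1 \<le> dim ?X" by simp
  show ?thesis
  proof
    assume "dim ?X = dim ?Xe + 1"
    then show "\<not> in_three_cut ends e" using dim_avoiding_add_two_le by fastforce
  next
    assume no_three_cut: "\<not> in_three_cut ends e"
    have "?X \<subseteq> span (insert (incidence_vector UNIV) ?Xe)"
    proof
      fix x assume "x \<in> ?X"
      then obtain F where F: "F \<in> two_edge_connected_subgraphs V ends" "x = incidence_vector F" by blast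
      show "x \<in> span (insert (incidence_vector UNIV) ?Xe)"
      proof (cases "e \<in> F")
        case True
        then show ?thesis using two_edge_connected_subgraph_in_span[OF no_three_cut F(1)] F(2) by simp
      next
        case False
        with F have "x \<in> ?Xe" by blast
        then show ?thesis by (intro span_base) simp
      qed
    qed
    then have "dim ?X \<le> dim (insert (incidence_vector UNIV) ?Xe)" by (metis dim_span dim_subset)
    also have "\<dots> \<le> dim ?Xe + 1" by (simp add: dim_insert)
    finally show "dim ?X = dim ?Xe + 1" using lower by simp
  qed
qed

end

theorem mainTheorem5:
  fixes V :: "'v set" and ends :: "'e::finite \<Rightarrow> 'v set" and e :: 'e
  assumes "simple_graph V ends"
    and "two_edge_connected ends V UNIV"
  shows "((\<forall>x\<in>TECSP V ends. x $ e \<ge> 0) \<and>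
          {x \<in> TECSP V ends. x $ e = 0} facet_of TECSP V ends)
     \<longleftrightarrow> \<not> (\<exists>S. {} \<noteq> S \<and> S \<subset> V \<and> e \<in> cut_edges ends UNIV S
                  \<and> card (cut_edges ends UNIV S) = 3)"
proof -
  let ?X = "incidence_vector ` two_edge_connected_subgraphs V ends"
  have "{incidence_vector F | F. \<exists>W. is_subgraph V ends W F \<and> two_edge_connected ends W F} = ?X"
    unfolding two_edge_connected_subgraphs_def by blast
  then have TECSP: "TECSP V ends = convex hull ?X" unfolding TECSP_def by simp
  have "{} \<in> two_edge_connected_subgraphs V ends"
    by (auto simp: two_edge_connected_subgraphs_def is_subgraph_def two_edge_connected_def
        connected_graph_def)
  then have "0 \<in> ?X" by (metis image_eqI incidence_vector_empty)
  moreover have nonneg: "\<forall>x\<in>?X. 0 \<le> x $ e" by auto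
  moreover have "{x \<in> ?X. x $ e = 0} = incidence_vector ` {H \<in> two_edge_connected_subgraphs V ends. e \<notin> H}"
    by auto
  ultimately have "{x \<in> TECSP V ends. x $ e = 0} facet_of TECSP V ends \<longleftrightarrow> \<not> in_three_cut ends e"
    unfolding TECSP using coordinate_face_facet_iff[of ?X e] dim_eq_dim_avoiding_plus_one_iff[OF assms]
    by simp
  moreover have "(\<exists>S. {} \<noteq> S \<and> S \<subset> V \<and> e \<in> cut_edges ends UNIV S \<and> card (cut_edges ends UNIV S) = 3)
      \<longleftrightarrow> in_three_cut ends e"
    unfolding in_three_cut_def using cut_edges_Int_vertices[OF assms(1)] by metis
  ultimately show ?thesis
    unfolding TECSP using convex_hull_coordinate_nonneg[OF nonneg] by auto
qed

end
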